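(* Let $c_0\neq 0$ and $c_1$ be real constants and consider the Newtonian system in the Euclidean plane $\ddot x=-\partial_x V_1$, $\ddot y=-\partial_y V_1$ with potential $V_1(x,y)=c_0(x^2+9y^2)+c_1y$. Then $$J_1=(x\dot y-y\dot x)\dot x^2-\frac{c_1}{18c_0}\dot x^3+\frac{c_1}{3}x^2\dot x+6c_0x^2y\dot x-\frac{2c_0}{3}x^3\dot y$$ is constant along every solution. *)

theory Defs
  imports "HOL-Analysis.Analysis"
begin

definition V1 :: "real \<Rightarrow> real \<Rightarrow> real \<Rightarrow> real \<Rightarrow> real" where
  "V1 c0 c1 x y = c0 * (x^2 + 9 * y^2) + c1 * y"

definition J1 :: "real \<Rightarrow> real \<Rightarrow> real \<Rightarrow> real \<Rightarrow> real \<Rightarrow> real \<Rightarrow> real" where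
  "J1 c0 c1 x y vx vy =
     (x * vy - y * vx) * vx^2 - c1 / (18 * c0) * vx^3 + c1 / 3 * x^2 * vx
     + 6 * c0 * x^2 * y * vx - 2 * c0 / 3 * x^3 * vy"

end

theory Submission
  imports Defs
begin

text \<open>Differentiating J_1 along a trajectory and substituting the accelerations
  \<open>-2 c0 x\<close> and \<open>-(18 c0 y + c1)\<close> yields a polynomial in position and velocity
  that cancels identically; hence J_1 has zero derivative and, on an interval, is constant.\<close>

lemma deriv_V1_fst: "deriv (\<lambda>u. V1 c0 c1 u b) a = 2 * c0 * a"
  unfolding V1_def by (rule DERIV_imp_deriv) (auto intro!: derivative_eq_intros)

lemma deriv_V1_snd: "deriv (\<lambda>v. V1 c0 c1 a v) b = 18 * c0 * b + c1"
  unfolding V1_def by (rule DERIV_imp_deriv) (auto intro!: derivative_eq_intros)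

lemma J1_has_real_derivative:
  assumes "(x has_real_derivative vx t) (at t within S)" "(y has_real_derivative vy t) (at t within S)"
    and "(vx has_real_derivative ax) (at t within S)" "(vy has_real_derivative ay) (at t within S)"
  shows "((\<lambda>t. J1 c0 c1 (x t) (y t) (vx t) (vy t)) has_real_derivative
      (x t * ay - y t * ax) * (vx t)^2 + (x t * vy t - y t * vx t) * (2 * vx t * ax)
      - c1 / (18 * c0) * (3 * (vx t)^2 * ax)
      + c1 / 3 * (2 * x t * (vx t)^2 + (x t)^2 * ax)
      + 6 * c0 * (2 * x t * y t * (vx t)^2 + (x t)^2 * vy t * vx t + (x t)^2 * y t * ax)
      - 2 * c0 / 3 * (3 * (x t)^2 * vx t * vy t + (x t)^3 * ay)) (at t within S)"
  unfolding J1_def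
  by (rule derivative_eq_intros assms refl)+ (simp add: algebra_simps power2_eq_square power3_eq_cube)

lemma J1_derivative_along_flow_eq_0:
  fixes c0 c1 x y vx vy :: real
  assumes "c0 \<noteq> 0"
  defines "ax \<equiv> - (2 * c0 * x)" and "ay \<equiv> - (18 * c0 * y + c1)"
  shows "(x * ay - y * ax) * vx^2 + (x * vy - y * vx) * (2 * vx * ax)
      - c1 / (18 * c0) * (3 * vx^2 * ax)
      + c1 / 3 * (2 * x * vx^2 + x^2 * ax)
      + 6 * c0 * (2 * x * y * vx^2 + x^2 * vy * vx + x^2 * y * ax)
      - 2 * c0 / 3 * (3 * x^2 * vx * vy + x^3 * ay) = 0"
proof -
  \<comment> \<open>the only non-polynomial term; it cancels against the \<open>c1/3\<close> terms, which is why \<open>c0 \<noteq> 0\<close> is needed\<close>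
  have "c1 / (18 * c0) * (3 * vx^2 * ax) = - (c1 / 3 * x * vx^2)"
    using assms(1) by (simp add: ax_def field_simps)
  then show ?thesis
    by (simp add: ax_def ay_def algebra_simps power2_eq_square power3_eq_cube)
qed

theorem mainTheorem4:
  fixes c0 c1 :: real
    and I :: "real set"
    and x y vx vy :: "real \<Rightarrow> real"
  assumes c0: "c0 \<noteq> 0"
    and I: "is_interval I"
    and dx: "\<And>t. t \<in> I \<Longrightarrow> (x has_real_derivative vx t) (at t within I)"
    and dy: "\<And>t. t \<in> I \<Longrightarrow> (y has_real_derivative vy t) (at t within I)"
    and ddx: "\<And>t. t \<in> I \<Longrightarrow>
       (vx has_real_derivative (- deriv (\<lambda>u. V1 c0 c1 u (y t)) (x t))) (at t within I)"
    and ddy: "\<And>t. t \<in> I \<Longrightarrow>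
       (vy has_real_derivative (- deriv (\<lambda>v. V1 c0 c1 (x t) v) (y t))) (at t within I)"
  shows "\<forall>s\<in>I. \<forall>t\<in>I. J1 c0 c1 (x s) (y s) (vx s) (vy s) = J1 c0 c1 (x t) (y t) (vx t) (vy t)"
proof -
  have "\<exists>c. \<forall>t\<in>I. J1 c0 c1 (x t) (y t) (vx t) (vy t) = c"
  proof (rule has_field_derivative_zero_constant)
    show "convex I" using I by (rule is_interval_convex)
  next
    fix t assume t: "t \<in> I"
    have ax: "(vx has_real_derivative - (2 * c0 * x t)) (at t within I)"
      using ddx[OF t] by (simp add: deriv_V1_fst)
    have ay: "(vy has_real_derivative - (18 * c0 * y t + c1)) (at t within I)"
      using ddy[OF t] by (simp add: deriv_V1_snd)
    show "((\<lambda>t. J1 c0 c1 (x t) (y t) (vx t) (vy t)) has_field_derivative 0) (at t within I)"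
      using J1_has_real_derivative[OF dx[OF t] dy[OF t] ax ay, of c0 c1]
      unfolding J1_derivative_along_flow_eq_0[OF c0] .
  qed
  then show ?thesis by auto
qed

end
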